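(* Let $q\geq 3$ be a prime power. In $\mathrm{PG}(2,q^2)$ there exists a semioval $\mathcal{S}\subset\mathcal{H}_q$ of size $k$ for every integer $k$ satisfying $q^3+1\geq k\geq q^3-2q^2+4q+1$ if $q$ is even, and $q^3+1\geq k\geq q^3-2q^2+5q-2$ if $q$ is odd.
   Context: $\mathrm{PG}(2,q^2)$ is the Desarguesian projective plane over $\mathbb{F}_{q^2}$. $\mathcal{H}_q$ denotes the Hermitian curve, the set of points of $\mathrm{PG}(2,q^2)$ satisfying $X_2X_0^q+X_2^qX_0+X_1^{q+1}=0$ (it has $q^3+1$ points). A semioval is a non-empty pointset $\mathcal{S}$ such that for every $P\in\mathcal{S}$ there is a unique line $t_P$ with $\mathcal{S}\cap t_P=\{P\}$. *)

theory Defs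
  imports "HOL-Computational_Algebra.Primes"
begin

type_synonym 'a vec3 = "'a \<times> 'a \<times> 'a"

definition pt :: "('a::field) vec3 \<Rightarrow> 'a vec3 set" where
  "pt v = (case v of (x, y, z) \<Rightarrow> {(c * x, c * y, c * z) | c. c \<noteq> 0})"

definition pg_points :: "('a::field) vec3 set set" where
  "pg_points = {pt v | v. v \<noteq> (0, 0, 0)}"

definition pg_line :: "('a::field) vec3 \<Rightarrow> 'a vec3 set set" where
  "pg_line u = (case u of (a, b, c) \<Rightarrow>
     {P \<in> pg_points. \<exists>x y z. (x, y, z) \<in> P \<and> a * x + b * y + c * z = 0})"

definition pg_lines :: "('a::field) vec3 set set set" where
  "pg_lines = {pg_line u | u. u \<noteq> (0, 0, 0)}"

definition hermitian_curve :: "nat \<Rightarrow> ('a::field) vec3 set set" where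
  "hermitian_curve q = {pt (x0, x1, x2) | x0 x1 x2. (x0, x1, x2) \<noteq> (0, 0, 0) \<and>
       x2 * x0 ^ q + x2 ^ q * x0 + x1 ^ (q + 1) = 0}"

definition semioval :: "('a::field) vec3 set set \<Rightarrow> bool" where
  "semioval S \<longleftrightarrow> S \<noteq> {} \<and> S \<subseteq> pg_points \<and>
     (\<forall>P\<in>S. \<exists>!l. l \<in> pg_lines \<and> S \<inter> l = {P})"

end

theory Submission
  imports Defs "HOL-Computational_Algebra.Polynomial" "HOL-Number_Theory.Residues"
begin

text \<open>
  In the chart \<open>X0 = 1\<close> the Hermitian curve is \<open>Tr y + Nm x = 0\<close>, with \<open>Tr\<close> and \<open>Nm\<close> the
  trace and norm of \<open>GF(q^2)\<close> over \<open>GF(q)\<close>, and its only point at infinity is \<open>(0 : 0 : 1)\<close>.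
  On a line \<open>y = a x + b\<close> the affine points of the curve lie over the "circle"
  \<open>Nm (x + a^q) = Nm a - Tr b\<close>: it degenerates to one point for the tangent and has at least
  \<open>q + 1\<close> points otherwise, while a vertical line meets the curve in \<open>q\<close> affine points and the
  point at infinity. Hence the whole curve is a semioval.

  Smaller semiovals: drop the point at infinity, choose a set \<open>X\<close> of \<open>2q - 3\<close> abscissae meeting
  every circle in at most \<open>q - 1\<close> points, and delete any \<open>m \<le> (2q - 3) q - 2\<close> affine points
  above \<open>X\<close> without ever leaving exactly one point on a vertical line. Every other line through a
  remaining point still contains a second remaining point, so tangents stay unique. This gives all
  sizes from \<open>q^3 - 2q^2 + 3q + 2\<close> to \<open>q^3 + 1\<close>, which contains both ranges of the statement.
\<close>

lemma card_eq_card_image_mult_fibres: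
  assumes "finite A" and "\<And>c. c \<in> f ` A \<Longrightarrow> card {x\<in>A. f x = c} = d"
  shows "card A = card (f ` A) * d"
proof -
  have "card A = card (\<Union>c\<in>f ` A. {x\<in>A. f x = c})"
    by (rule arg_cong[of _ _ card]) auto
  also have "\<dots> = (\<Sum>c\<in>f ` A. card {x\<in>A. f x = c})"
    by (rule card_UN_disjoint) (use assms in auto)
  also have "\<dots> = card (f ` A) * d"
    using assms(2) by simp
  finally show ?thesis .
qed

lemma card_ge_2_obtain_other:
  assumes "card A \<ge> 2"
  obtains x where "x \<in> A" and "x \<noteq> y"
proof -
  have "\<not> A \<subseteq> {y}"
    using assms card_mono[of "{y}" A] by auto
  thus thesis
    using that by blast
qed

lemma split_avoiding_pred:
  fixes n c m :: nat
  assumes "n \<ge> 3" and "c \<ge> 3" and "m \<le> n + c - 2"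
  obtains s m' where "m = s + m'" and "s \<le> n" and "s \<noteq> n - 1" and "m' \<le> c - 2"
proof (cases "m \<ge> n")
  case True
  with assms show thesis
    using that[of n "m - n"] by simp
next
  case False
  with assms show thesis
    using that[of "n - 2" 1] that[of m 0] by (cases "m = n - 1") auto
qed

lemma exists_subset_Sigma_no_column_card:
  fixes V :: "'i \<Rightarrow> 'b set"
  assumes "finite I" and "I \<noteq> {}" and "\<And>i. i \<in> I \<Longrightarrow> finite (V i) \<and> card (V i) = n"
    and "n \<ge> 3" and "m \<le> card I * n - 2"
  shows "\<exists>R \<subseteq> Sigma I V. card R = m \<and> (\<forall>i. card {y. (i, y) \<in> R} \<noteq> n - 1)"
  using assms(1,2,3,5)
proof (induction I arbitrary: m rule: finite_ne_induct)
  case (singleton i)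
  hence "m \<le> card (V i)"
    by simp
  then obtain W where W: "W \<subseteq> V i" "card W = m"
    by (rule obtain_subset_with_card_n)
  have "{y. (j, y) \<in> {i} \<times> W} = (if j = i then W else {})" for j
    by auto
  thus ?case
    using W singleton assms(4) by (intro exI[of _ "{i} \<times> W"]) (auto simp: card_cartesian_product)
next
  case (insert i F)
  have Vi: "finite (V i)" "card (V i) = n"
    using insert.prems by auto
  have "card F \<ge> 1"
    using insert.hyps by (simp add: Suc_le_eq card_gt_0_iff)
  hence "card F * n \<ge> 3"
    using assms(4) mult_le_mono[of 1 "card F" 3 n] by simp
  moreover have "m \<le> n + card F * n - 2"
    using insert.prems insert.hyps by (simp add: algebra_simps)
  ultimately obtain s m' where sm: "m = s + m'" "s \<le> n" "s \<noteq> n - 1" "m' \<le> card F * n - 2"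
    using split_avoiding_pred[OF assms(4)] by blast
  obtain R' where R': "R' \<subseteq> Sigma F V" "card R' = m'" "\<forall>j. card {y. (j, y) \<in> R'} \<noteq> n - 1"
    using insert.IH[OF _ sm(4)] insert.prems by auto
  obtain W where W: "W \<subseteq> V i" "card W = s"
    using sm(2) Vi by (metis obtain_subset_with_card_n)
  define R where "R = R' \<union> {i} \<times> W"
  have "finite R'"
    using R'(1) insert.hyps insert.prems by (meson finite_SigmaI finite_subset insertCI)
  moreover have "R' \<inter> {i} \<times> W = {}"
    using R'(1) insert.hyps by auto
  ultimately have "card R = m"
    using W Vi R' sm by (simp add: R_def card_Un_disjoint card_cartesian_product finite_subset)
  moreover have "{y. (j, y) \<in> R} = (if j = i then W else {y. (j, y) \<in> R'})" for j
    using R'(1) insert.hyps by (auto simp: R_def)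
  ultimately show ?case
    using R' W sm by (intro exI[of _ R]) (auto simp: R_def)
qed

section \<open>Points and lines of the projective plane\<close>

lemma mem_pt_iff: "(a, b, c) \<in> pt (x, y, z) \<longleftrightarrow> (\<exists>d. d \<noteq> 0 \<and> a = d * x \<and> b = d * y \<and> c = d * z)"
  by (auto simp: pt_def)

lemma self_mem_pt: "(x, y, z) \<in> pt (x, y, z :: 'a::field)"
  by (auto simp: mem_pt_iff intro: exI[of _ 1])

lemma pt_in_pg_points: "v \<noteq> (0, 0, 0) \<Longrightarrow> pt v \<in> pg_points"
  unfolding pg_points_def by blast

lemma pg_line_in_pg_lines: "u \<noteq> (0, 0, 0) \<Longrightarrow> pg_line u \<in> pg_lines"
  unfolding pg_lines_def by blast

lemma pt_in_pg_line_iff: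
  assumes "(x, y, z) \<noteq> (0, 0, 0 :: 'a::field)"
  shows "pt (x, y, z) \<in> pg_line (a, b, c) \<longleftrightarrow> a * x + b * y + c * z = 0"
proof
  assume "pt (x, y, z) \<in> pg_line (a, b, c)"
  then obtain d where "d \<noteq> 0" "a * (d * x) + b * (d * y) + c * (d * z) = 0"
    by (auto simp: pg_line_def mem_pt_iff)
  moreover have "a * (d * x) + b * (d * y) + c * (d * z) = d * (a * x + b * y + c * z)" for d
    by (simp add: algebra_simps)
  ultimately show "a * x + b * y + c * z = 0"
    by simp
next
  assume "a * x + b * y + c * z = 0"
  thus "pt (x, y, z) \<in> pg_line (a, b, c)"
    using assms self_mem_pt[of x y z] by (auto simp: pg_line_def intro!: pt_in_pg_points)
qed

lemma pg_line_scale: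
  assumes "d \<noteq> (0 :: 'a::field)"
  shows "pg_line (d * a, d * b, d * c) = pg_line (a, b, c)"
proof -
  have "P \<in> pg_line (d * a, d * b, d * c) \<longleftrightarrow> P \<in> pg_line (a, b, c)" for P
  proof (cases "P \<in> pg_points")
    case True
    then obtain x y z where "P = pt (x, y, z)" "(x, y, z) \<noteq> (0, 0, 0)"
      by (auto simp: pg_points_def)
    moreover have "d * a * x + d * b * y + d * c * z = d * (a * x + b * y + c * z)"
      by (simp add: algebra_simps)
    ultimately show ?thesis
      using assms by (simp add: pt_in_pg_line_iff)
  qed (simp add: pg_line_def)
  thus ?thesis by blast
qed

definition inf_pt :: "('a::field) vec3 set" where
  "inf_pt = pt (0, 0, 1)"

definition aff_pt :: "('a::field) \<Rightarrow> 'a \<Rightarrow> 'a vec3 set" where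
  "aff_pt x y = pt (1, x, y)"

definition aff_pts :: "(('a::field) \<times> 'a) set \<Rightarrow> 'a vec3 set set" where
  "aff_pts G = (\<lambda>(x, y). aff_pt x y) ` G"

lemma aff_pt_eq_iff: "aff_pt x y = aff_pt x' y' \<longleftrightarrow> x = x' \<and> y = y'"
proof
  assume "aff_pt x y = aff_pt x' y'"
  hence "(1, x', y') \<in> pt (1, x, y)"
    using self_mem_pt unfolding aff_pt_def by metis
  thus "x = x' \<and> y = y'"
    by (auto simp: mem_pt_iff)
qed simp

lemma aff_pt_neq_inf_pt: "aff_pt x y \<noteq> inf_pt"
proof
  assume "aff_pt x y = inf_pt"
  hence "(1, x, y) \<in> pt (0, 0, 1)"
    using self_mem_pt unfolding aff_pt_def inf_pt_def by metis
  thus False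
    by (auto simp: mem_pt_iff)
qed

lemma card_aff_pts: "finite G \<Longrightarrow> card (aff_pts G) = card G"
  unfolding aff_pts_def by (rule card_image) (auto simp: inj_on_def aff_pt_eq_iff)

lemma inf_pt_in_pg_points: "inf_pt \<in> pg_points"
  unfolding inf_pt_def by (rule pt_in_pg_points) simp

lemma aff_pts_subset_pg_points: "aff_pts G \<subseteq> pg_points"
  unfolding aff_pts_def aff_pt_def by (auto intro: pt_in_pg_points)

lemma inf_pt_in_pg_line_iff: "inf_pt \<in> pg_line (a, b, c) \<longleftrightarrow> c = 0"
  unfolding inf_pt_def by (subst pt_in_pg_line_iff) auto

lemma aff_pt_in_pg_line_iff: "aff_pt x y \<in> pg_line (a, b, c) \<longleftrightarrow> a + b * x + c * y = 0"
  unfolding aff_pt_def by (subst pt_in_pg_line_iff) auto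

lemma pg_lines_cases:
  assumes "l \<in> pg_lines"
  obtains "l = pg_line (1, 0, 0)"
  | x0 where "l = pg_line (- x0, 1, 0)"
  | a b where "l = pg_line (b, a, - 1)"
proof -
  obtain \<alpha> \<beta> \<gamma> where l: "l = pg_line (\<alpha>, \<beta>, \<gamma>)" "(\<alpha>, \<beta>, \<gamma>) \<noteq> (0, 0, 0)"
    using assms by (auto simp: pg_lines_def)
  consider "\<gamma> = 0" "\<beta> = 0" | "\<gamma> = 0" "\<beta> \<noteq> 0" | "\<gamma> \<noteq> 0"
    by blast
  thus thesis
  proof cases
    case 1
    thus thesis using that(1) l pg_line_scale[of \<alpha> 1 0 0] by simp
  next
    case 2
    thus thesis using that(2)[of "- \<alpha> / \<beta>"] l pg_line_scale[of \<beta> "\<alpha> / \<beta>" 1 0] by simp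
  next
    case 3
    thus thesis
      using that(3)[where a = "- \<beta> / \<gamma>" and b = "- \<alpha> / \<gamma>"] l
        pg_line_scale[of "- \<gamma>" "- \<alpha> / \<gamma>" "- \<beta> / \<gamma>" "- 1"]
      by simp
  qed
qed

section \<open>The quadratic extension \<open>GF(q^2) / GF(q)\<close>\<close>

text \<open>The library version \<open>finite_field_power_card_eq_same\<close> needs the sort \<open>finite_field\<close>,
  which a type variable of sort \<open>{finite, field}\<close> does not carry.\<close>
lemma finite_field_power_card:
  fixes x :: "'a::{finite,field}"
  shows "x ^ card (UNIV :: 'a set) = x"
proof (cases "x = 0")
  case False
  define G :: "'a monoid" where "G = \<lparr>carrier = UNIV - {0}, monoid.mult = (*), one = 1\<rparr>"
  have "group G"
    by (rule groupI) (auto simp: G_def intro!: bexI[of _ "inverse _"])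
  have pow: "y [^]\<^bsub>G\<^esub> n = y ^ n" for y :: 'a and n :: nat
    by (induction n) (simp_all add: G_def)
  have "order G = card (UNIV :: 'a set) - 1"
    by (simp add: order_def G_def card_Diff_subset)
  moreover have "x ^ order G = 1"
    using group.pow_order_eq_1[OF \<open>group G\<close>, of x] False unfolding pow by (simp add: G_def)
  moreover have "card (UNIV :: 'a set) = Suc (card (UNIV :: 'a set) - 1)"
    using finite_UNIV_card_ge_0[where ?'a = 'a] by simp
  ultimately show ?thesis
    by (metis power_Suc mult_1_right)
qed (simp add: finite_UNIV_card_ge_0)

locale quadratic_extension =
  fixes field_type :: "'a::{finite,field} itself" and q :: nat
  assumes card_UNIV: "card (UNIV :: 'a set) = q ^ 2"
    and frobenius_add: "\<And>x y :: 'a. (x + y) ^ q = x ^ q + y ^ q"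
begin

lemma q_ge_2: "q \<ge> 2"
proof -
  have "card {0, 1 :: 'a} \<le> q ^ 2"
    using card_UNIV card_mono[of UNIV "{0, 1 :: 'a}"] by simp
  hence "2 \<le> q ^ 2" by simp
  show ?thesis
  proof (rule ccontr)
    assume "\<not> q \<ge> 2"
    hence "q ^ 2 \<le> 1 ^ 2" by (intro power_mono) auto
    with \<open>2 \<le> q ^ 2\<close> show False by simp
  qed
qed

lemma frobenius_frobenius [simp]: "((x :: 'a) ^ q) ^ q = x"
  using finite_field_power_card[of x] by (simp add: card_UNIV power_mult[symmetric] power2_eq_square)

lemma frobenius_inj_iff: "((x :: 'a) ^ q = y ^ q) \<longleftrightarrow> x = y"
  by (metis frobenius_frobenius)

lemma frobenius_neg: "(- (x :: 'a)) ^ q = - (x ^ q)"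
proof -
  have "x ^ q + (- x) ^ q = 0"
    using frobenius_add[of x "- x"] q_ge_2 by (simp add: zero_power)
  thus ?thesis by (simp add: eq_neg_iff_add_eq_0 add.commute)
qed

lemma frobenius_diff: "((x :: 'a) - y) ^ q = x ^ q - y ^ q"
  using frobenius_add[of x "- y"] frobenius_neg[of y] by simp

lemma card_roots_frobenius_plus_linear_le: "card {x :: 'a. x ^ q + c * x = 0} \<le> q"
proof -
  let ?p = "Polynomial.monom 1 q + [:0, c:]"
  have deg: "degree ?p = q"
    using q_ge_2 by (subst degree_add_eq_left) (auto simp: degree_monom_eq)
  have "{x :: 'a. x ^ q + c * x = 0} = {x. poly ?p x = 0}"
    by (auto simp: poly_monom mult.commute)
  moreover have "?p \<noteq> 0"
    using deg q_ge_2 by auto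
  ultimately show ?thesis
    using card_poly_roots_bound[of ?p] deg by simp
qed

definition base_field :: "'a set" where
  "base_field = {x. x ^ q = x}"

definition Tr :: "'a \<Rightarrow> 'a" where
  "Tr y = y + y ^ q"

definition Nm :: "'a \<Rightarrow> 'a" where
  "Nm y = y ^ q * y"

lemma zero_in_base_field: "0 \<in> base_field"
  using q_ge_2 by (simp add: base_field_def)

lemma base_field_neg: "c \<in> base_field \<Longrightarrow> - c \<in> base_field"
  by (simp add: base_field_def frobenius_neg)

lemma base_field_diff: "c \<in> base_field \<Longrightarrow> d \<in> base_field \<Longrightarrow> c - d \<in> base_field"
  by (simp add: base_field_def frobenius_diff)

lemma card_base_field_le: "card base_field \<le> q"
proof -
  have "base_field = {x. x ^ q + (- 1) * x = 0}"
    by (auto simp: base_field_def)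
  thus ?thesis using card_roots_frobenius_plus_linear_le[of "- 1"] by simp
qed

lemma Tr_add: "Tr (x + y) = Tr x + Tr y"
  by (simp add: Tr_def frobenius_add algebra_simps)

lemma Tr_in_base_field: "Tr y \<in> base_field"
  by (simp add: Tr_def base_field_def frobenius_add add.commute)

lemma Nm_in_base_field: "Nm y \<in> base_field"
  by (simp add: Nm_def base_field_def power_mult_distrib mult.commute)

lemma Nm_mult: "Nm (x * y) = Nm x * Nm y"
  by (simp add: Nm_def power_mult_distrib mult_ac)

lemma Nm_eq_0_iff [simp]: "Nm y = 0 \<longleftrightarrow> y = 0"
  using q_ge_2 by (simp add: Nm_def)

lemma Nm_0 [simp]: "Nm 0 = 0"
  by simp

lemma card_Tr_fibre_eq_kernel: "card {y. Tr y = Tr y0} = card {y. Tr y = 0}"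
proof -
  have "{y. Tr y = Tr y0} = (\<lambda>y. y + y0) ` {y. Tr y = 0}"
  proof (intro equalityI subsetI)
    fix y assume "y \<in> {y. Tr y = Tr y0}"
    hence "Tr (y - y0) = 0" using Tr_add[of "y - y0" y0] by simp
    thus "y \<in> (\<lambda>y. y + y0) ` {y. Tr y = 0}" by (auto intro: image_eqI[of _ _ "y - y0"])
  qed (auto simp: Tr_add)
  thus ?thesis by (simp add: card_image)
qed

lemma card_range_Tr_and_kernel: "card (range Tr) = q \<and> card {y. Tr y = 0} = q"
proof -
  let ?I = "card (range Tr)" and ?K = "card {y. Tr y = 0}"
  have "card (UNIV :: 'a set) = ?I * ?K"
    by (rule card_eq_card_image_mult_fibres) (auto simp: card_Tr_fibre_eq_kernel)
  hence prod: "?I * ?K = q * q"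
    by (simp add: card_UNIV power2_eq_square)
  have I: "?I \<le> q"
    using card_mono[of base_field "range Tr"] Tr_in_base_field card_base_field_le by fastforce
  have K: "?K \<le> q"
    using card_roots_frobenius_plus_linear_le[of 1] by (simp add: Tr_def add.commute)
  have "?I * ?K \<le> ?I * q" and "?I * q \<le> q * q"
    using I K by (simp_all add: mult_le_mono1 mult_le_mono2)
  hence "?I * q = q * q" and "?I * ?K = ?I * q"
    using prod by linarith+
  moreover have "q > 0"
    using q_ge_2 by simp
  ultimately show ?thesis
    by simp
qed

lemma Tr_range: "range Tr = base_field"
  using card_range_Tr_and_kernel card_base_field_le Tr_in_base_field
  by (intro card_seteq) auto

lemma card_base_field: "card base_field = q"
  using card_range_Tr_and_kernel Tr_range by simp

lemma card_Tr_fibre: "c \<in> base_field \<Longrightarrow> card {y. Tr y = c} = q"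
  using card_range_Tr_and_kernel card_Tr_fibre_eq_kernel Tr_range by (metis rangeE)

lemma card_Nm_fibre_eq_kernel:
  assumes "z0 \<noteq> 0"
  shows "card {z. Nm z = Nm z0} = card {w. Nm w = 1}"
proof -
  have "{z. Nm z = Nm z0} = (\<lambda>w. w * z0) ` {w. Nm w = 1}"
  proof (intro equalityI subsetI)
    fix z assume "z \<in> {z. Nm z = Nm z0}"
    hence "Nm (z / z0) = 1"
      using assms Nm_mult[of "z / z0" z0] by (simp add: field_simps)
    thus "z \<in> (\<lambda>w. w * z0) ` {w. Nm w = 1}"
      using assms by (auto intro: image_eqI[of _ _ "z / z0"])
  qed (auto simp: Nm_mult)
  moreover have "inj (\<lambda>w. w * z0)"
    using assms by (auto simp: inj_def)
  ultimately show ?thesis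
    by (simp add: card_image inj_on_subset)
qed

lemma card_Nm_fibre_ge:
  assumes "z0 \<noteq> 0"
  shows "card {z. Nm z = Nm z0} \<ge> q + 1"
proof -
  let ?U = "UNIV - {0 :: 'a}" and ?K = "card {w. Nm w = 1}"
  have "card ?U = card (Nm ` ?U) * ?K"
  proof (rule card_eq_card_image_mult_fibres)
    fix c assume "c \<in> Nm ` ?U"
    then obtain z where "z \<noteq> 0" "c = Nm z" by auto
    moreover from this have "{x \<in> ?U. Nm x = c} = {x. Nm x = Nm z}"
      by auto
    ultimately show "card {x \<in> ?U. Nm x = c} = ?K"
      using card_Nm_fibre_eq_kernel by simp
  qed simp
  moreover have "card ?U = (q - 1) * (q + 1)"
    using card_UNIV q_ge_2 by (simp add: card_Diff_subset power2_eq_square algebra_simps)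
  moreover have "card (Nm ` ?U) \<le> q - 1"
  proof -
    have "Nm ` ?U \<subseteq> base_field - {0}"
      using Nm_in_base_field by auto
    thus ?thesis
      using card_mono[of "base_field - {0}"] card_base_field zero_in_base_field by fastforce
  qed
  ultimately have "(q - 1) * (q + 1) \<le> (q - 1) * ?K"
    by (metis mult.commute mult_le_mono2)
  hence "?K \<ge> q + 1"
    using q_ge_2 by (subst (asm) mult_le_cancel1) simp
  thus ?thesis
    using card_Nm_fibre_eq_kernel[OF assms] by simp
qed

definition circle :: "'a \<Rightarrow> 'a \<Rightarrow> 'a set" where
  "circle w r = {x. Nm (x + w) = r}"

lemma card_circle_ge:
  assumes "z0 \<noteq> 0"
  shows "card (circle w (Nm z0)) \<ge> q + 1"
proof -
  have "circle w (Nm z0) = (\<lambda>z. z - w) ` {z. Nm z = Nm z0}"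
    by (auto simp: circle_def intro: image_eqI[of _ _ "_ + w"])
  hence "card (circle w (Nm z0)) = card {z. Nm z = Nm z0}"
    by (simp add: card_image)
  thus ?thesis
    using card_Nm_fibre_ge[OF assms] by simp
qed

text \<open>On a translate of the base field, the norm is a quadratic polynomial.\<close>
lemma card_circle_Int_base_field_translate_le_2:
  "card (circle w r \<inter> (\<lambda>t. t + e) ` base_field) \<le> 2"
proof -
  define v where "v = e + w"
  let ?p = "[:Nm v - r, Tr v, 1:]"
  have "circle w r \<inter> (\<lambda>t. t + e) ` base_field \<subseteq> (\<lambda>t. t + e) ` {t. poly ?p t = 0}"
  proof
    fix x assume "x \<in> circle w r \<inter> (\<lambda>t. t + e) ` base_field"
    then obtain t where t: "t ^ q = t" "x = t + e" "Nm (t + v) = r"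
      by (auto simp: circle_def base_field_def v_def add.assoc)
    have "Nm (t + v) = t * t + t * Tr v + Nm v"
      using t(1) by (simp add: Nm_def Tr_def frobenius_add algebra_simps)
    hence "poly ?p t = 0"
      using t(3) by (simp add: algebra_simps)
    thus "x \<in> (\<lambda>t. t + e) ` {t. poly ?p t = 0}"
      using t(2) by auto
  qed
  hence "card (circle w r \<inter> (\<lambda>t. t + e) ` base_field) \<le> card ((\<lambda>t. t + e) ` {t. poly ?p t = 0})"
    by (intro card_mono) auto
  also have "\<dots> \<le> card {t. poly ?p t = 0}"
    by (rule card_image_le) simp
  also have "\<dots> \<le> 2"
    using card_poly_roots_bound[of ?p] by simp
  finally show ?thesis .
qed

text \<open>The base field together with \<open>q - 3\<close> points of a disjoint translate of it.\<close>
lemma exists_set_meeting_circles_sparsely: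
  assumes "q \<ge> 3"
  obtains X where "card X = 2 * q - 3" and "\<And>w r. card (circle w r \<inter> X) \<le> q - 1"
proof -
  have "card base_field < card (UNIV :: 'a set)"
    using card_base_field card_UNIV q_ge_2 by (simp add: power2_eq_square)
  hence "base_field \<noteq> UNIV"
    by auto
  then obtain d where d: "d \<notin> base_field"
    by auto
  define D where "D = (\<lambda>t. t + d) ` base_field"
  have "card D = q"
    using card_base_field by (simp add: D_def card_image)
  then obtain E where E: "E \<subseteq> D" "card E = q - 3"
    by (metis diff_le_self obtain_subset_with_card_n)
  have "base_field \<inter> D = {}"
    using d base_field_diff by (fastforce simp: D_def)
  hence "card (base_field \<union> E) = 2 * q - 3"
    using E card_base_field assms by (subst card_Un_disjoint) auto
  moreover have "card (circle w r \<inter> (base_field \<union> E)) \<le> q - 1" for w r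
  proof -
    have "card (circle w r \<inter> (base_field \<union> E)) \<le> card (circle w r \<inter> base_field) + card (circle w r \<inter> E)"
      by (metis Int_Un_distrib card_Un_le)
    moreover have "card (circle w r \<inter> base_field) \<le> 2"
      using card_circle_Int_base_field_translate_le_2[of w r 0] by simp
    moreover have "card (circle w r \<inter> E) \<le> q - 3"
      using E by (metis card_mono finite inf_le2)
    moreover have "card (circle w r \<inter> E) \<le> card (circle w r \<inter> D)"
      using E by (intro card_mono) auto
    moreover have "card (circle w r \<inter> D) \<le> 2"
      unfolding D_def by (rule card_circle_Int_base_field_translate_le_2)
    ultimately show ?thesis
      using assms by linarith
  qed
  ultimately show ?thesis
    using that by blast
qed

section \<open>Tangents to the Hermitian curve\<close>

text \<open>At \<open>(1, x, y)\<close> the curve equation \<open>X2 X0^q + X2^q X0 + X1^(q+1) = 0\<close> reads \<open>Tr y + Nm x = 0\<close>.\<close>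
definition herm_aff :: "('a \<times> 'a) set" where
  "herm_aff = {(x, y). Tr y + Nm x = 0}"

definition herm_column :: "'a \<Rightarrow> 'a set" where
  "herm_column x = {y. Tr y = - Nm x}"

lemma herm_aff_eq_Sigma: "herm_aff = Sigma UNIV herm_column"
  by (auto simp: herm_aff_def herm_column_def eq_neg_iff_add_eq_0)

lemma card_herm_column: "card (herm_column x) = q"
  unfolding herm_column_def by (rule card_Tr_fibre) (simp add: base_field_neg Nm_in_base_field)

lemma card_herm_aff: "card herm_aff = q ^ 3"
  by (simp add: herm_aff_eq_Sigma card_herm_column card_UNIV power3_eq_cube power2_eq_square)

lemma inf_pt_in_hermitian_curve: "inf_pt \<in> hermitian_curve q"
  unfolding hermitian_curve_def inf_pt_def
  using q_ge_2 by (intro CollectI exI[of _ 0] exI[of _ 1]) (simp add: zero_power)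

lemma aff_pts_herm_aff_subset: "aff_pts herm_aff \<subseteq> hermitian_curve q"
  unfolding hermitian_curve_def aff_pts_def aff_pt_def herm_aff_def
  by (force simp: Tr_def Nm_def power_Suc2 algebra_simps)

text \<open>The affine points of the curve on the line \<open>y = a x + b\<close> lie over the circle
  \<open>circle (a\<^sup>q) (Nm a - Tr b)\<close>.\<close>
lemma Tr_line_plus_Nm: "Tr (a * x + b) + Nm x = Nm (x + a ^ q) - Nm a + Tr b"
  by (simp add: Tr_def Nm_def frobenius_add algebra_simps)

lemma Nm_add_frobenius_eq_0_iff: "Nm (x + a ^ q) = 0 \<longleftrightarrow> a = - (x ^ q)"
proof -
  have "a = - (x ^ q) \<longleftrightarrow> a ^ q = (- (x ^ q)) ^ q"
    by (rule frobenius_inj_iff[symmetric])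
  also have "\<dots> \<longleftrightarrow> x + a ^ q = 0"
    by (auto simp: frobenius_neg eq_neg_iff_add_eq_0 add.commute)
  finally show ?thesis
    by simp
qed

text \<open>The line \<open>y = a x + b\<close> through \<open>(x0, y0)\<close> whose circle degenerates, i.e. \<open>a = - x0^q\<close>.\<close>
definition herm_tangent :: "'a \<Rightarrow> 'a \<Rightarrow> 'a vec3 set set" where
  "herm_tangent x0 y0 = pg_line (y0 + x0 ^ q * x0, - (x0 ^ q), - 1)"

lemma herm_tangent_in_pg_lines: "herm_tangent x0 y0 \<in> pg_lines"
  unfolding herm_tangent_def by (rule pg_line_in_pg_lines) simp

lemma aff_pt_in_herm_tangent: "aff_pt x0 y0 \<in> herm_tangent x0 y0"
  by (simp add: herm_tangent_def aff_pt_in_pg_line_iff)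

lemma herm_aff_on_herm_tangent:
  assumes "(x0, y0) \<in> herm_aff" and "(x, y) \<in> herm_aff" and "aff_pt x y \<in> herm_tangent x0 y0"
  shows "x = x0 \<and> y = y0"
proof -
  define a where "a = - (x0 ^ q)"
  define b where "b = y0 - a * x0"
  have "Nm (x0 + a ^ q) = 0"
    by (simp add: a_def frobenius_neg)
  hence "Tr b = Nm a"
    using assms(1) Tr_line_plus_Nm[of a x0 b] by (simp add: herm_aff_def b_def)
  moreover have y: "y = a * x + b"
    using assms(3) by (simp add: herm_tangent_def aff_pt_in_pg_line_iff a_def b_def algebra_simps)
  ultimately have "Nm (x + a ^ q) = 0"
    using assms(2) Tr_line_plus_Nm[of a x b] by (simp add: herm_aff_def)
  hence "x = x0"
    by (simp add: a_def frobenius_neg)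
  with y show ?thesis
    by (simp add: b_def)
qed

lemma herm_tangent_Int:
  assumes "G \<subseteq> herm_aff" and "S \<subseteq> insert inf_pt (aff_pts G)"
    and "(x0, y0) \<in> G" and "aff_pt x0 y0 \<in> S"
  shows "S \<inter> herm_tangent x0 y0 = {aff_pt x0 y0}"
proof -
  have "Q = aff_pt x0 y0" if Q: "Q \<in> S" "Q \<in> herm_tangent x0 y0" for Q
  proof -
    have "Q \<noteq> inf_pt"
      using Q(2) by (auto simp: herm_tangent_def inf_pt_in_pg_line_iff)
    with Q(1) assms(2) have "Q \<in> aff_pts G"
      by blast
    then obtain x y where xy: "(x, y) \<in> G" "Q = aff_pt x y"
      by (auto simp: aff_pts_def)
    hence "x = x0 \<and> y = y0"
      using herm_aff_on_herm_tangent assms(1,3) Q(2) by blast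
    with xy(2) show ?thesis
      by simp
  qed
  thus ?thesis
    using assms(4) aff_pt_in_herm_tangent by blast
qed

lemma unique_tangent_at_inf_pt:
  assumes "\<And>x. \<exists>y. (x, y) \<in> G"
  shows "\<exists>!l. l \<in> pg_lines \<and> insert inf_pt (aff_pts G) \<inter> l = {inf_pt}"
proof (rule ex1I[of _ "pg_line (1, 0, 0)"])
  show "pg_line (1, 0, 0) \<in> pg_lines \<and> insert inf_pt (aff_pts G) \<inter> pg_line (1, 0, 0) = {inf_pt}"
    by (auto simp: pg_line_in_pg_lines inf_pt_in_pg_line_iff aff_pts_def aff_pt_in_pg_line_iff)
next
  fix l assume l: "l \<in> pg_lines \<and> insert inf_pt (aff_pts G) \<inter> l = {inf_pt}"
  hence on_l: "inf_pt \<in> l" and off_l: "\<And>x y. (x, y) \<in> G \<Longrightarrow> aff_pt x y \<notin> l"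
    using aff_pt_neq_inf_pt by (fastforce simp: aff_pts_def)+
  from l[THEN conjunct1] show "l = pg_line (1, 0, 0)"
  proof (cases rule: pg_lines_cases)
    case (2 x0)
    obtain y where "(x0, y) \<in> G"
      using assms by blast
    hence "aff_pt x0 y \<notin> l"
      by (rule off_l)
    thus ?thesis
      by (simp add: 2 aff_pt_in_pg_line_iff)
  next
    case (3 a b)
    with on_l show ?thesis
      by (simp add: inf_pt_in_pg_line_iff)
  qed
qed

lemma non_tangent_meets_again:
  assumes S: "aff_pts G \<subseteq> S" and P: "(x0, y0) \<in> G"
    and vertical: "inf_pt \<in> S \<or> (\<exists>y. y \<noteq> y0 \<and> (x0, y) \<in> G)"
    and secant: "\<And>a b. y0 = a * x0 + b \<Longrightarrow> Nm (x0 + a ^ q) \<noteq> 0 \<Longrightarrow> \<exists>x. x \<noteq> x0 \<and> (x, a * x + b) \<in> G"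
    and l: "l \<in> pg_lines" "aff_pt x0 y0 \<in> l" "l \<noteq> herm_tangent x0 y0"
  obtains Q where "Q \<in> S" and "Q \<in> l" and "Q \<noteq> aff_pt x0 y0"
proof -
  have aff_pt_in_S: "aff_pt x y \<in> S" if "(x, y) \<in> G" for x y
    using S that by (force simp: aff_pts_def)
  from l(1) show thesis
  proof (cases rule: pg_lines_cases)
    case 1
    with l(2) show thesis
      by (simp add: aff_pt_in_pg_line_iff)
  next
    case (2 x1)
    with l(2) have l_eq: "l = pg_line (- x0, 1, 0)"
      by (simp add: aff_pt_in_pg_line_iff)
    from vertical show thesis
    proof
      assume "inf_pt \<in> S"
      moreover have "inf_pt \<in> l"
        by (simp add: l_eq inf_pt_in_pg_line_iff)
      moreover have "inf_pt \<noteq> aff_pt x0 y0"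
        by (metis aff_pt_neq_inf_pt)
      ultimately show thesis
        by (rule that)
    next
      assume "\<exists>y. y \<noteq> y0 \<and> (x0, y) \<in> G"
      then obtain y where "y \<noteq> y0" "(x0, y) \<in> G"
        by blast
      show thesis
      proof (rule that)
        show "aff_pt x0 y \<in> S"
          using \<open>(x0, y) \<in> G\<close> by (rule aff_pt_in_S)
        show "aff_pt x0 y \<in> l"
          by (simp add: l_eq aff_pt_in_pg_line_iff)
        show "aff_pt x0 y \<noteq> aff_pt x0 y0"
          using \<open>y \<noteq> y0\<close> by (simp add: aff_pt_eq_iff)
      qed
    qed
  next
    case (3 a b)
    with l(2) have y0: "y0 = a * x0 + b"
      by (simp add: aff_pt_in_pg_line_iff algebra_simps)
    have "Nm (x0 + a ^ q) \<noteq> 0"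
    proof
      assume "Nm (x0 + a ^ q) = 0"
      hence "a = - (x0 ^ q)"
        by (simp only: Nm_add_frobenius_eq_0_iff)
      with y0 l(3) show False
        by (simp add: 3 herm_tangent_def)
    qed
    then obtain x where "x \<noteq> x0" "(x, a * x + b) \<in> G"
      using secant y0 by blast
    show thesis
    proof (rule that)
      show "aff_pt x (a * x + b) \<in> S"
        using \<open>(x, a * x + b) \<in> G\<close> by (rule aff_pt_in_S)
      show "aff_pt x (a * x + b) \<in> l"
        by (simp add: 3 aff_pt_in_pg_line_iff)
      show "aff_pt x (a * x + b) \<noteq> aff_pt x0 y0"
        using \<open>x \<noteq> x0\<close> by (simp add: aff_pt_eq_iff)
    qed
  qed
qed

lemma unique_tangent_at_aff_pt:
  assumes G: "G \<subseteq> herm_aff" and S: "aff_pts G \<subseteq> S" "S \<subseteq> insert inf_pt (aff_pts G)"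
    and P: "(x0, y0) \<in> G"
    and vertical: "inf_pt \<in> S \<or> (\<exists>y. y \<noteq> y0 \<and> (x0, y) \<in> G)"
    and secant: "\<And>a b. y0 = a * x0 + b \<Longrightarrow> Nm (x0 + a ^ q) \<noteq> 0 \<Longrightarrow> \<exists>x. x \<noteq> x0 \<and> (x, a * x + b) \<in> G"
  shows "\<exists>!l. l \<in> pg_lines \<and> S \<inter> l = {aff_pt x0 y0}"
proof (rule ex1I[of _ "herm_tangent x0 y0"])
  have "aff_pt x0 y0 \<in> S"
    using S(1) P by (force simp: aff_pts_def)
  thus "herm_tangent x0 y0 \<in> pg_lines \<and> S \<inter> herm_tangent x0 y0 = {aff_pt x0 y0}"
    using herm_tangent_in_pg_lines herm_tangent_Int[OF G S(2) P] by simp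
next
  fix l assume l: "l \<in> pg_lines \<and> S \<inter> l = {aff_pt x0 y0}"
  show "l = herm_tangent x0 y0"
  proof (rule ccontr)
    assume "l \<noteq> herm_tangent x0 y0"
    moreover have "aff_pt x0 y0 \<in> l"
      using l by blast
    ultimately obtain Q where "Q \<in> S" "Q \<in> l" "Q \<noteq> aff_pt x0 y0"
      using non_tangent_meets_again[OF S(1) P vertical secant] l by blast
    with l show False
      by blast
  qed
qed

section \<open>Semiovals on the Hermitian curve\<close>

lemma secant_meets_herm_aff_Diff_again:
  assumes X: "\<And>w r. card (circle w r \<inter> X) \<le> q - 1" and R: "R \<subseteq> Sigma X herm_column"
    and P: "(x0, a * x0 + b) \<in> herm_aff - R" and nondeg: "Nm (x0 + a ^ q) \<noteq> 0"
  shows "\<exists>x. x \<noteq> x0 \<and> (x, a * x + b) \<in> herm_aff - R"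
proof -
  define C where "C = circle (a ^ q) (Nm (x0 + a ^ q))"
  have "card C \<ge> q + 1"
    unfolding C_def by (rule card_circle_ge) (use nondeg in simp)
  moreover have "card C = card (C \<inter> X) + card (C - X)"
    by (metis card_Int_Diff finite)
  ultimately have "card (C - X) \<ge> 2"
    using X[of "a ^ q" "Nm (x0 + a ^ q)"] q_ge_2 by (simp add: C_def)
  then obtain x where x: "x \<in> C - X" "x \<noteq> x0"
    by (rule card_ge_2_obtain_other)
  have "Tr (a * x + b) + Nm x = Tr (a * x0 + b) + Nm x0"
    using x(1) Tr_line_plus_Nm[of a x b] Tr_line_plus_Nm[of a x0 b] by (simp add: C_def circle_def)
  hence "(x, a * x + b) \<in> herm_aff"
    using P by (simp add: herm_aff_def)
  moreover have "(x, a * x + b) \<notin> R"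
    using x(1) R by auto
  ultimately show ?thesis
    using x(2) by blast
qed

lemma column_meets_herm_aff_Diff_again:
  assumes "q \<ge> 3" and R: "R \<subseteq> herm_aff" and cols: "card {y. (x, y) \<in> R} \<noteq> q - 1"
    and P: "(x, y) \<in> herm_aff - R"
  shows "\<exists>y'. y' \<noteq> y \<and> (x, y') \<in> herm_aff - R"
proof -
  let ?Rx = "{y. (x, y) \<in> R}"
  have Rx_sub: "?Rx \<subseteq> herm_column x - {y}"
    using R P by (auto simp: herm_aff_eq_Sigma)
  have "y \<in> herm_column x"
    using P by (simp add: herm_aff_eq_Sigma)
  hence "card (herm_column x - {y}) = q - 1"
    by (simp add: card_herm_column)
  hence "card ?Rx \<le> q - 1"
    using card_mono[OF _ Rx_sub] by simp
  with cols have "card ?Rx \<le> q - 2"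
    by linarith
  moreover have "card (herm_column x - ?Rx) = q - card ?Rx"
    using Rx_sub card_herm_column by (subst card_Diff_subset) (auto intro: finite_subset)
  ultimately have "card (herm_column x - ?Rx) \<ge> 2"
    using assms(1) by linarith
  then obtain y' where "y' \<in> herm_column x - ?Rx" "y' \<noteq> y"
    by (rule card_ge_2_obtain_other)
  thus ?thesis
    by (auto simp: herm_aff_eq_Sigma)
qed

lemma semioval_hermitian_curve: "semioval (insert inf_pt (aff_pts herm_aff))"
  unfolding semioval_def
proof (intro conjI ballI)
  show "insert inf_pt (aff_pts herm_aff) \<subseteq> pg_points"
    using inf_pt_in_pg_points aff_pts_subset_pg_points by blast
next
  fix P assume "P \<in> insert inf_pt (aff_pts herm_aff)"
  then consider "P = inf_pt" | x0 y0 where "(x0, y0) \<in> herm_aff" "P = aff_pt x0 y0"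
    by (auto simp: aff_pts_def)
  thus "\<exists>!l. l \<in> pg_lines \<and> insert inf_pt (aff_pts herm_aff) \<inter> l = {P}"
  proof cases
    case 1
    have "herm_column x \<noteq> {}" for x
      using card_herm_column[of x] q_ge_2 by auto
    thus ?thesis
      unfolding 1 by (intro unique_tangent_at_inf_pt) (auto simp: herm_aff_eq_Sigma)
  next
    case 2
    show ?thesis
      unfolding 2(2)
    proof (rule unique_tangent_at_aff_pt[OF order_refl subset_insertI order_refl 2(1)])
      fix a b assume "y0 = a * x0 + b" "Nm (x0 + a ^ q) \<noteq> 0"
      thus "\<exists>x. x \<noteq> x0 \<and> (x, a * x + b) \<in> herm_aff"
        using secant_meets_herm_aff_Diff_again[of "{}" "{}" x0 a b] 2(1) by auto
    qed simp
  qed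
qed simp

lemma semioval_aff_pts_herm_aff_Diff:
  assumes "q \<ge> 3" and X: "\<And>w r. card (circle w r \<inter> X) \<le> q - 1"
    and R: "R \<subseteq> Sigma X herm_column" and cols: "\<And>x. card {y. (x, y) \<in> R} \<noteq> q - 1"
    and nonempty: "herm_aff - R \<noteq> {}"
  shows "semioval (aff_pts (herm_aff - R))"
  unfolding semioval_def
proof (intro conjI ballI)
  show "aff_pts (herm_aff - R) \<noteq> {}"
    using nonempty by (simp add: aff_pts_def)
  show "aff_pts (herm_aff - R) \<subseteq> pg_points"
    by (rule aff_pts_subset_pg_points)
next
  fix P assume "P \<in> aff_pts (herm_aff - R)"
  then obtain x0 y0 where P: "(x0, y0) \<in> herm_aff - R" "P = aff_pt x0 y0"
    by (auto simp: aff_pts_def)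
  have "R \<subseteq> herm_aff"
    using R by (auto simp: herm_aff_eq_Sigma)
  show "\<exists>!l. l \<in> pg_lines \<and> aff_pts (herm_aff - R) \<inter> l = {P}"
    unfolding P(2)
  proof (rule unique_tangent_at_aff_pt[OF _ order_refl _ P(1)])
    show "aff_pts (herm_aff - R) \<subseteq> insert inf_pt (aff_pts (herm_aff - R))"
      by blast
    show "inf_pt \<in> aff_pts (herm_aff - R) \<or> (\<exists>y. y \<noteq> y0 \<and> (x0, y) \<in> herm_aff - R)"
      using column_meets_herm_aff_Diff_again[OF assms(1) \<open>R \<subseteq> herm_aff\<close> cols P(1)] by blast
    fix a b assume "y0 = a * x0 + b" "Nm (x0 + a ^ q) \<noteq> 0"
    thus "\<exists>x. x \<noteq> x0 \<and> (x, a * x + b) \<in> herm_aff - R"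
      using secant_meets_herm_aff_Diff_again[OF X R] P(1) by blast
  qed blast
qed

lemma exists_removable_set:
  assumes q3: "q \<ge> 3" and m: "m \<le> (2 * q - 3) * q - 2"
  shows "\<exists>X. \<exists>R \<subseteq> Sigma X herm_column. (\<forall>w r. card (circle w r \<inter> X) \<le> q - 1) \<and>
    card R = m \<and> (\<forall>x. card {y. (x, y) \<in> R} \<noteq> q - 1)"
proof -
  obtain X where X: "card X = 2 * q - 3" "\<And>w r. card (circle w r \<inter> X) \<le> q - 1"
    using exists_set_meeting_circles_sparsely[OF q3] by blast
  moreover have "X \<noteq> {}"
    using X(1) q3 by auto
  ultimately have "\<exists>R \<subseteq> Sigma X herm_column. card R = m \<and> (\<forall>x. card {y. (x, y) \<in> R} \<noteq> q - 1)"
    using card_herm_column q3 m by (intro exists_subset_Sigma_no_column_card) auto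
  with X(2) show ?thesis
    by blast
qed

lemma exists_semioval_in_hermitian_curve:
  assumes q3: "q \<ge> 3" and k_le: "k \<le> q ^ 3 + 1" and k_ge: "q ^ 3 + 3 * q + 2 \<le> k + 2 * q ^ 2"
  shows "\<exists>S :: 'a vec3 set set. semioval S \<and> S \<subseteq> hermitian_curve q \<and> card S = k"
proof (cases "k = q ^ 3 + 1")
  case True
  have "inf_pt \<notin> aff_pts herm_aff"
    using aff_pt_neq_inf_pt by (fastforce simp: aff_pts_def)
  hence "card (insert inf_pt (aff_pts herm_aff)) = k"
    using True by (simp add: card_aff_pts card_herm_aff)
  moreover have "insert inf_pt (aff_pts herm_aff) \<subseteq> hermitian_curve q"
    using inf_pt_in_hermitian_curve aff_pts_herm_aff_subset by blast
  ultimately show ?thesis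
    using semioval_hermitian_curve by (intro exI[of _ "insert inf_pt (aff_pts herm_aff)"]) simp
next
  case False
  have "(2 * q - 3) * q + 3 * q = 2 * q ^ 2"
    using q3 by (simp add: power2_eq_square algebra_simps diff_mult_distrib)
  with k_ge have m: "q ^ 3 - k \<le> (2 * q - 3) * q - 2"
    by linarith
  obtain X R where R: "R \<subseteq> Sigma X herm_column" and X: "\<forall>w r. card (circle w r \<inter> X) \<le> q - 1"
    and card_R: "card R = q ^ 3 - k" and columns: "\<forall>x. card {y. (x, y) \<in> R} \<noteq> q - 1"
    using exists_removable_set[OF q3 m] by blast
  have "R \<subseteq> herm_aff"
    using R by (auto simp: herm_aff_eq_Sigma)
  hence card_S: "card (aff_pts (herm_aff - R)) = k"
    using card_R False k_le by (simp add: card_aff_pts card_Diff_subset finite_subset card_herm_aff)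
  have "2 * q ^ 2 \<le> q ^ 3"
    using q3 by (simp add: power2_eq_square power3_eq_cube)
  hence "k \<noteq> 0"
    using k_ge by linarith
  hence "herm_aff - R \<noteq> {}"
    using card_S by (metis aff_pts_def card.empty image_empty)
  hence "semioval (aff_pts (herm_aff - R))"
    using semioval_aff_pts_herm_aff_Diff[OF q3 _ R] X columns by blast
  moreover have "aff_pts (herm_aff - R) \<subseteq> hermitian_curve q"
    using aff_pts_herm_aff_subset by (auto simp: aff_pts_def)
  ultimately show ?thesis
    using card_S by (intro exI[of _ "aff_pts (herm_aff - R)"]) simp
qed

end

lemma quadratic_extension_prime_power:
  assumes "prime p" and "card (UNIV :: 'a::{finite,field} set) = (p ^ n) ^ 2"
  shows "quadratic_extension TYPE('a) (p ^ n)"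
proof
  have char_prime: "prime CHAR('a)"
    using prime_CHAR_semidom finite_imp_CHAR_pos[OF finite_UNIV] by blast
  have "CHAR('a) dvd p ^ (2 * n)"
    using CHAR_dvd_CARD[where ?'a = 'a] assms(2) by (simp add: power_mult mult.commute)
  hence "CHAR('a) = p"
    using char_prime assms(1) prime_dvd_power primes_dvd_imp_eq by blast
  thus "(x + y) ^ p ^ n = x ^ p ^ n + y ^ p ^ n" for x y :: 'a
    using freshmans_dream'[OF char_prime] by blast
qed (rule assms(2))

theorem mainTheorem4:
  fixes q k :: nat
  assumes "\<exists>p n. prime p \<and> n > 0 \<and> q = p ^ n"
    and "q \<ge> 3"
    and "card (UNIV :: 'a set) = q ^ 2"
    and "k \<le> q ^ 3 + 1"
    and "even q \<Longrightarrow> int k \<ge> int q ^ 3 - 2 * int q ^ 2 + 4 * int q + 1"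
    and "odd q \<Longrightarrow> int k \<ge> int q ^ 3 - 2 * int q ^ 2 + 5 * int q - 2"
  shows "\<exists>S :: ('a::{finite, field}) vec3 set set. semioval S \<and> S \<subseteq> hermitian_curve q \<and> card S = k"
proof -
  obtain p n where "prime p" "q = p ^ n"
    using assms(1) by blast
  hence "quadratic_extension TYPE('a) q"
    using quadratic_extension_prime_power assms(3) by blast
  moreover have "int (q ^ 3 + 3 * q + 2) \<le> int (k + 2 * q ^ 2)"
    using assms(2,5,6) unfolding of_nat_add of_nat_mult of_nat_power of_nat_numeral
    by (cases "even q") linarith+
  hence "q ^ 3 + 3 * q + 2 \<le> k + 2 * q ^ 2"
    by (simp only: of_nat_le_iff)
  ultimately show ?thesis
    using quadratic_extension.exists_semioval_in_hermitian_curve assms(2,4) by blast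
qed

end
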